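(* Let $(L,\le,\bot,\top)$ be a complete lattice and $(\&_i,\swarrow^i,\nwarrow_i)$, $i=1,\dots,n$, adjoint triples on $L$ such that $x\,\&_i\,\top=\top\,\&_i\,x=x$ for all $x\in L$ and all $i$. Let $(A,B,R,\sigma)$ be a normalized context and $\mathcal{M}$ its concept lattice. Then: (1) $\langle g_\top,f_\bot\rangle\in\mathcal{M}$ and $\langle g_\bot,f_\top\rangle\in\mathcal{M}$; (2) for all $a\in A$, $b\in B$ and $x,y\in L\setminus\{\bot\}$, neither $\langle\phi_{a,x}^\downarrow,\phi_{a,x}^{\downarrow\uparrow}\rangle$ nor $\langle\phi_{b,y}^{\uparrow\downarrow},\phi_{b,y}^{\uparrow}\rangle$ belongs to $\{\langle g_\top,f_\bot\rangle,\langle g_\bot,f_\top\rangle\}$.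
   Context: An adjoint triple on $L$ is a triple of maps $\&,\swarrow,\nwarrow\colon L\times L\to L$ with $x\le z\swarrow y\iff x\& y\le z\iff y\le z\nwarrow x$ for all $x,y,z\in L$. A context is $(A,B,R,\sigma)$ with $A,B$ non-empty sets, $R\colon A\times B\to L$, $\sigma\colon A\times B\to\{1,\dots,n\}$; it is normalized if for every $a\in A$ there are $b_1,b_2\in B$ with $R(a,b_1)\ne\bot$, $R(a,b_2)=\bot$, and for every $b\in B$ there are $a_1,a_2\in A$ with $R(a_1,b)\neq\bot$, $R(a_2,b)=\bot$. For $g\colon B\to L$, $f\colon A\to L$: $g^\uparrow(a)=\inf_{b\in B}R(a,b)\swarrow^{\sigma(a,b)}g(b)$ and $f^\downarrow(b)=\inf_{a\in A}R(a,b)\nwarrow_{\sigma(a,b)}f(a)$. The concept lattice $\mathcal{M}$ is the set of pairs $\langle g,f\rangle$ with $g^\uparrow=f$, $f^\downarrow=g$, ordered by $\langle g_1,f_1\rangle\preceq\langle g_2,f_2\rangle$ iff $g_1\le g_2$ pointwise. $g_\top,g_\bot\colon B\to L$ and $f_\top,f_\bot\colon A\to L$ denote the constant maps with values $\top$, $\bot$. The fuzzy-attribute $\phi_{a,x}\colon A\to L$ takes value $x$ at $a$ and $\bot$ elsewhere; the fuzzy-object $\phi_{b,y}\colon B\to L$ takes value $y$ at $b$ and $\bot$ elsewhere. *)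

theory Defs
  imports Main "HOL-Library.FuncSet"
begin

text \<open>Adjoint triple: x \<le> z \<swarrow> y iff x & y \<le> z iff y \<le> z \<nwarrow> x.
  Here sw z y stands for z \<swarrow> y and nw z x for z \<nwarrow> x.\<close>
definition adjoint_triple ::
  "('l::complete_lattice \<Rightarrow> 'l \<Rightarrow> 'l) \<Rightarrow> ('l \<Rightarrow> 'l \<Rightarrow> 'l) \<Rightarrow> ('l \<Rightarrow> 'l \<Rightarrow> 'l) \<Rightarrow> bool" where
  "adjoint_triple tnorm sw nw \<longleftrightarrow>
     (\<forall>x y z. (x \<le> sw z y \<longleftrightarrow> tnorm x y \<le> z) \<and> (tnorm x y \<le> z \<longleftrightarrow> y \<le> nw z x))"

definition normalized_context ::
  "'a set \<Rightarrow> 'b set \<Rightarrow> ('a \<Rightarrow> 'b \<Rightarrow> 'l::complete_lattice) \<Rightarrow> bool" where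
  "normalized_context A B R \<longleftrightarrow>
     (\<forall>a\<in>A. (\<exists>b1\<in>B. R a b1 \<noteq> bot) \<and> (\<exists>b2\<in>B. R a b2 = bot)) \<and>
     (\<forall>b\<in>B. (\<exists>a1\<in>A. R a1 b \<noteq> bot) \<and> (\<exists>a2\<in>A. R a2 b = bot))"

text \<open>Fuzzy subsets are represented as extensional functions on A resp. B.\<close>
definition up_map ::
  "'a set \<Rightarrow> 'b set \<Rightarrow> ('a \<Rightarrow> 'b \<Rightarrow> 'l::complete_lattice) \<Rightarrow> ('a \<Rightarrow> 'b \<Rightarrow> nat)
   \<Rightarrow> (nat \<Rightarrow> 'l \<Rightarrow> 'l \<Rightarrow> 'l) \<Rightarrow> ('b \<Rightarrow> 'l) \<Rightarrow> ('a \<Rightarrow> 'l)" where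
  "up_map A B R \<sigma> sw g = restrict (\<lambda>a. INF b\<in>B. sw (\<sigma> a b) (R a b) (g b)) A"

definition down_map ::
  "'a set \<Rightarrow> 'b set \<Rightarrow> ('a \<Rightarrow> 'b \<Rightarrow> 'l::complete_lattice) \<Rightarrow> ('a \<Rightarrow> 'b \<Rightarrow> nat)
   \<Rightarrow> (nat \<Rightarrow> 'l \<Rightarrow> 'l \<Rightarrow> 'l) \<Rightarrow> ('a \<Rightarrow> 'l) \<Rightarrow> ('b \<Rightarrow> 'l)" where
  "down_map A B R \<sigma> nw f = restrict (\<lambda>b. INF a\<in>A. nw (\<sigma> a b) (R a b) (f a)) B"

definition concept_lattice ::
  "'a set \<Rightarrow> 'b set \<Rightarrow> ('a \<Rightarrow> 'b \<Rightarrow> 'l::complete_lattice) \<Rightarrow> ('a \<Rightarrow> 'b \<Rightarrow> nat)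
   \<Rightarrow> (nat \<Rightarrow> 'l \<Rightarrow> 'l \<Rightarrow> 'l) \<Rightarrow> (nat \<Rightarrow> 'l \<Rightarrow> 'l \<Rightarrow> 'l) \<Rightarrow> (('b \<Rightarrow> 'l) \<times> ('a \<Rightarrow> 'l)) set" where
  "concept_lattice A B R \<sigma> sw nw =
     {(g, f). g \<in> extensional B \<and> f \<in> extensional A \<and>
              up_map A B R \<sigma> sw g = f \<and> down_map A B R \<sigma> nw f = g}"

definition const_map :: "'x set \<Rightarrow> 'l \<Rightarrow> ('x \<Rightarrow> 'l)" where
  "const_map X c = restrict (\<lambda>_. c) X"

definition phi :: "'x set \<Rightarrow> 'x \<Rightarrow> 'l::complete_lattice \<Rightarrow> ('x \<Rightarrow> 'l)" where
  "phi X u x = restrict (\<lambda>v. if v = u then x else bot) X"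

end

theory Submission
  imports Defs
begin

text \<open>Both extremal concepts arise because \<open>z \<swarrow> \<bottom> = \<top>\<close> and, when \<open>\<top>\<close> is a unit of \<open>&\<close>,
  \<open>z \<swarrow> \<top> = z\<close>: the infimum defining \<open>g\<^sub>\<top>\<^sup>\<up>(a)\<close> contains \<open>R(a,b\<^sub>2) \<swarrow> \<top> = \<bottom>\<close>.
  For the fuzzy-object \<open>\<phi>\<^sub>b\<^sub>,\<^sub>y\<close> one gets \<open>\<phi>\<^sub>b\<^sub>,\<^sub>y\<^sup>\<up>(a) = R(a,b) \<swarrow> y\<close>, which is \<open>\<ge> R(a,b)\<close>,
  hence not \<open>\<bottom>\<close> where \<open>R(a,b) \<noteq> \<bottom>\<close>, and which equals \<open>\<top>\<close> only if \<open>y \<le> R(a,b)\<close>, hence not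
  \<open>\<top>\<close> where \<open>R(a,b) = \<bottom>\<close>. Normalization provides both kinds of \<open>a\<close>. The statements for
  \<open>\<down>\<close> follow by transposing the context, which swaps the two residua.\<close>

definition unital_adjoint_triple ::
  "('l::complete_lattice \<Rightarrow> 'l \<Rightarrow> 'l) \<Rightarrow> ('l \<Rightarrow> 'l \<Rightarrow> 'l) \<Rightarrow> ('l \<Rightarrow> 'l \<Rightarrow> 'l) \<Rightarrow> bool" where
  "unital_adjoint_triple t s w \<longleftrightarrow> adjoint_triple t s w \<and> (\<forall>x. t x top = x \<and> t top x = x)"

lemma adjoint_triple_swap:
  "adjoint_triple t s w \<Longrightarrow> adjoint_triple (\<lambda>x y. t y x) w s"
  unfolding adjoint_triple_def by blast

lemma unital_adjoint_triple_swap: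
  "unital_adjoint_triple t s w \<Longrightarrow> unital_adjoint_triple (\<lambda>x y. t y x) w s"
  unfolding unital_adjoint_triple_def by (simp add: adjoint_triple_swap)

lemma adjoint_triple_mono_right:
  assumes "adjoint_triple t s w" "y \<le> y'"
  shows "t x y \<le> t x y'"
proof -
  have "y' \<le> w (t x y') x" using assms(1) unfolding adjoint_triple_def by blast
  then have "y \<le> w (t x y') x" using assms(2) by order
  then show ?thesis using assms(1) unfolding adjoint_triple_def by blast
qed

lemma adjoint_triple_sw_bot:
  assumes "adjoint_triple t s w"
  shows "s z bot = top"
proof -
  have "t top bot \<le> z" using assms unfolding adjoint_triple_def by simp
  then have "top \<le> s z bot" using assms unfolding adjoint_triple_def by blast
  then show ?thesis by (simp add: top_unique)
qed

lemma unital_adjoint_triple_le_sw: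
  assumes "unital_adjoint_triple t s w"
  shows "r \<le> s r y"
proof -
  have "t r y \<le> t r top"
    using assms adjoint_triple_mono_right[of t s w y top r] unfolding unital_adjoint_triple_def by simp
  then show ?thesis using assms unfolding unital_adjoint_triple_def adjoint_triple_def by simp
qed

lemma unital_adjoint_triple_sw_top:
  assumes "unital_adjoint_triple t s w"
  shows "s r top = r"
proof (rule antisym)
  have "t (s r top) top \<le> r" using assms unfolding unital_adjoint_triple_def adjoint_triple_def by blast
  then show "s r top \<le> r" using assms unfolding unital_adjoint_triple_def by simp
qed (rule unital_adjoint_triple_le_sw[OF assms])

lemma unital_adjoint_triple_sw_eq_top_iff:
  assumes "unital_adjoint_triple t s w"
  shows "s r y = top \<longleftrightarrow> y \<le> r"
proof -
  have "s r y = top \<longleftrightarrow> t top y \<le> r"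
    using assms unfolding unital_adjoint_triple_def adjoint_triple_def by (metis top_unique)
  then show ?thesis using assms unfolding unital_adjoint_triple_def by simp
qed

lemma down_map_eq_up_map_transpose:
  "down_map A B R \<sigma> nw f = up_map B A (\<lambda>b a. R a b) (\<lambda>b a. \<sigma> a b) nw f"
  by (simp add: down_map_def up_map_def)

lemma up_map_const_bot:
  assumes "\<And>a b. a \<in> A \<Longrightarrow> b \<in> B \<Longrightarrow> adjoint_triple (tnorm (\<sigma> a b)) (sw (\<sigma> a b)) (nw (\<sigma> a b))"
  shows "up_map A B R \<sigma> sw (const_map B bot) = const_map A top"
  by (rule ext) (simp add: up_map_def const_map_def adjoint_triple_sw_bot[OF assms])

lemma up_map_const_top:
  assumes "\<And>a b. a \<in> A \<Longrightarrow> b \<in> B \<Longrightarrow> unital_adjoint_triple (tnorm (\<sigma> a b)) (sw (\<sigma> a b)) (nw (\<sigma> a b))"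
    and "\<forall>a\<in>A. \<exists>b\<in>B. R a b = bot"
  shows "up_map A B R \<sigma> sw (const_map B top) = const_map A bot"
proof
  fix a
  show "up_map A B R \<sigma> sw (const_map B top) a = const_map A bot a"
  proof (cases "a \<in> A")
    case True
    then obtain b where b: "b \<in> B" "R a b = bot" using assms(2) by blast
    have "(INF b'\<in>B. sw (\<sigma> a b') (R a b') (const_map B top b')) \<le> sw (\<sigma> a b) (R a b) top"
      using INF_lower[OF b(1)] b(1) by (simp add: const_map_def)
    also have "\<dots> = bot" using unital_adjoint_triple_sw_top[OF assms(1)] True b by simp
    finally show ?thesis using True by (simp add: up_map_def const_map_def bot_unique)
  qed (simp add: up_map_def const_map_def)
qed

lemma up_map_phi:
  assumes "\<And>a b. a \<in> A \<Longrightarrow> b \<in> B \<Longrightarrow> adjoint_triple (tnorm (\<sigma> a b)) (sw (\<sigma> a b)) (nw (\<sigma> a b))"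
    and "a \<in> A" "b \<in> B"
  shows "up_map A B R \<sigma> sw (phi B b y) a = sw (\<sigma> a b) (R a b) y"
proof -
  have "(INF b'\<in>B. sw (\<sigma> a b') (R a b') (phi B b y b')) = sw (\<sigma> a b) (R a b) y"
  proof (rule antisym)
    show "(INF b'\<in>B. sw (\<sigma> a b') (R a b') (phi B b y b')) \<le> sw (\<sigma> a b) (R a b) y"
      using INF_lower[OF assms(3), of "\<lambda>b'. sw (\<sigma> a b') (R a b') (phi B b y b')"] assms(3)
      by (simp add: phi_def)
    show "sw (\<sigma> a b) (R a b) y \<le> (INF b'\<in>B. sw (\<sigma> a b') (R a b') (phi B b y b'))"
      by (rule INF_greatest) (simp add: phi_def adjoint_triple_sw_bot[OF assms(1)] assms(2))
  qed
  then show ?thesis using assms(2) by (simp add: up_map_def)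
qed

lemma up_map_phi_not_const:
  assumes triple: "\<And>a b. a \<in> A \<Longrightarrow> b \<in> B \<Longrightarrow> unital_adjoint_triple (tnorm (\<sigma> a b)) (sw (\<sigma> a b)) (nw (\<sigma> a b))"
    and b: "b \<in> B" and y: "y \<noteq> bot"
    and related: "\<exists>a\<in>A. R a b \<noteq> bot" and unrelated: "\<exists>a\<in>A. R a b = bot"
  shows "up_map A B R \<sigma> sw (phi B b y) \<notin> {const_map A top, const_map A bot}"
proof -
  have up_phi: "up_map A B R \<sigma> sw (phi B b y) a = sw (\<sigma> a b) (R a b) y" if "a \<in> A" for a
    using up_map_phi[OF _ that b] triple unfolding unital_adjoint_triple_def by blast
  obtain a1 where a1: "a1 \<in> A" "R a1 b \<noteq> bot" using related by blast
  obtain a2 where a2: "a2 \<in> A" "R a2 b = bot" using unrelated by blast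
  have "R a1 b \<le> up_map A B R \<sigma> sw (phi B b y) a1"
    unfolding up_phi[OF a1(1)] by (rule unital_adjoint_triple_le_sw[OF triple[OF a1(1) b]])
  then have "up_map A B R \<sigma> sw (phi B b y) a1 \<noteq> const_map A bot a1"
    using a1 by (auto simp: const_map_def bot_unique)
  moreover have "up_map A B R \<sigma> sw (phi B b y) a2 \<noteq> const_map A top a2"
    using unital_adjoint_triple_sw_eq_top_iff[OF triple[OF a2(1) b]] up_phi[OF a2(1)] a2 y
    by (simp add: const_map_def bot_unique)
  ultimately show ?thesis by auto
qed

lemma down_map_const_bot:
  assumes "\<And>a b. a \<in> A \<Longrightarrow> b \<in> B \<Longrightarrow> adjoint_triple (tnorm (\<sigma> a b)) (sw (\<sigma> a b)) (nw (\<sigma> a b))"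
  shows "down_map A B R \<sigma> nw (const_map A bot) = const_map B top"
  unfolding down_map_eq_up_map_transpose
  by (rule up_map_const_bot[where tnorm = "\<lambda>i x y. tnorm i y x" and nw = sw])
    (simp add: assms adjoint_triple_swap)

lemma down_map_const_top:
  assumes "\<And>a b. a \<in> A \<Longrightarrow> b \<in> B \<Longrightarrow> unital_adjoint_triple (tnorm (\<sigma> a b)) (sw (\<sigma> a b)) (nw (\<sigma> a b))"
    and "\<forall>b\<in>B. \<exists>a\<in>A. R a b = bot"
  shows "down_map A B R \<sigma> nw (const_map A top) = const_map B bot"
  unfolding down_map_eq_up_map_transpose
  by (rule up_map_const_top[where tnorm = "\<lambda>i x y. tnorm i y x" and nw = sw])
    (simp_all add: assms unital_adjoint_triple_swap)

lemma down_map_phi_not_const: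
  assumes "\<And>a b. a \<in> A \<Longrightarrow> b \<in> B \<Longrightarrow> unital_adjoint_triple (tnorm (\<sigma> a b)) (sw (\<sigma> a b)) (nw (\<sigma> a b))"
    and "a \<in> A" "x \<noteq> bot" "\<exists>b\<in>B. R a b \<noteq> bot" "\<exists>b\<in>B. R a b = bot"
  shows "down_map A B R \<sigma> nw (phi A a x) \<notin> {const_map B top, const_map B bot}"
  unfolding down_map_eq_up_map_transpose
  by (rule up_map_phi_not_const[where tnorm = "\<lambda>i x y. tnorm i y x" and nw = sw])
    (simp_all add: assms unital_adjoint_triple_swap)

lemma const_top_bot_in_concept_lattice:
  assumes "\<And>a b. a \<in> A \<Longrightarrow> b \<in> B \<Longrightarrow> unital_adjoint_triple (tnorm (\<sigma> a b)) (sw (\<sigma> a b)) (nw (\<sigma> a b))"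
    and "\<forall>a\<in>A. \<exists>b\<in>B. R a b = bot"
  shows "(const_map B top, const_map A bot) \<in> concept_lattice A B R \<sigma> sw nw"
  using up_map_const_top[of A B tnorm \<sigma> sw nw R, OF assms] down_map_const_bot[of A B tnorm \<sigma> sw nw] assms(1)
  by (simp add: concept_lattice_def const_map_def unital_adjoint_triple_def)

lemma const_bot_top_in_concept_lattice:
  assumes "\<And>a b. a \<in> A \<Longrightarrow> b \<in> B \<Longrightarrow> unital_adjoint_triple (tnorm (\<sigma> a b)) (sw (\<sigma> a b)) (nw (\<sigma> a b))"
    and "\<forall>b\<in>B. \<exists>a\<in>A. R a b = bot"
  shows "(const_map B bot, const_map A top) \<in> concept_lattice A B R \<sigma> sw nw"
  using down_map_const_top[of A B tnorm \<sigma> sw nw R, OF assms] up_map_const_bot[of A B tnorm \<sigma> sw nw] assms(1)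
  by (simp add: concept_lattice_def const_map_def unital_adjoint_triple_def)

theorem proposition26:
  fixes n :: nat
    and tnorm sw nw :: "nat \<Rightarrow> 'l::complete_lattice \<Rightarrow> 'l \<Rightarrow> 'l"
    and A :: "'a set" and B :: "'b set"
    and R :: "'a \<Rightarrow> 'b \<Rightarrow> 'l" and \<sigma> :: "'a \<Rightarrow> 'b \<Rightarrow> nat"
  assumes adj: "\<forall>i\<in>{1..n}. adjoint_triple (tnorm i) (sw i) (nw i)"
    and units: "\<forall>i\<in>{1..n}. \<forall>x. tnorm i x top = x \<and> tnorm i top x = x"
    and A_ne: "A \<noteq> {}" and B_ne: "B \<noteq> {}"
    and sigma: "\<forall>a\<in>A. \<forall>b\<in>B. \<sigma> a b \<in> {1..n}"
    and norm: "normalized_context A B R"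
  shows "(const_map B top, const_map A bot) \<in> concept_lattice A B R \<sigma> sw nw \<and>
         (const_map B bot, const_map A top) \<in> concept_lattice A B R \<sigma> sw nw \<and>
         (\<forall>a\<in>A. \<forall>x. x \<noteq> bot \<longrightarrow>
            (down_map A B R \<sigma> nw (phi A a x),
             up_map A B R \<sigma> sw (down_map A B R \<sigma> nw (phi A a x)))
            \<notin> {(const_map B top, const_map A bot), (const_map B bot, const_map A top)}) \<and>
         (\<forall>b\<in>B. \<forall>y. y \<noteq> bot \<longrightarrow>
            (down_map A B R \<sigma> nw (up_map A B R \<sigma> sw (phi B b y)),
             up_map A B R \<sigma> sw (phi B b y))
            \<notin> {(const_map B top, const_map A bot), (const_map B bot, const_map A top)})"
proof -
  have triple: "unital_adjoint_triple (tnorm (\<sigma> a b)) (sw (\<sigma> a b)) (nw (\<sigma> a b))"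
    if "a \<in> A" "b \<in> B" for a b
    using adj units sigma that by (simp add: unital_adjoint_triple_def)
  have rows: "\<forall>a\<in>A. (\<exists>b\<in>B. R a b \<noteq> bot) \<and> (\<exists>b\<in>B. R a b = bot)"
    and cols: "\<forall>b\<in>B. (\<exists>a\<in>A. R a b \<noteq> bot) \<and> (\<exists>a\<in>A. R a b = bot)"
    using norm unfolding normalized_context_def by blast+
  have "\<forall>a\<in>A. \<forall>x. x \<noteq> bot \<longrightarrow> down_map A B R \<sigma> nw (phi A a x) \<notin> {const_map B top, const_map B bot}"
    using down_map_phi_not_const[of A B tnorm \<sigma> sw nw, OF triple] rows by blast
  moreover have "\<forall>b\<in>B. \<forall>y. y \<noteq> bot \<longrightarrow> up_map A B R \<sigma> sw (phi B b y) \<notin> {const_map A top, const_map A bot}"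
    using up_map_phi_not_const[of A B tnorm \<sigma> sw nw, OF triple] cols by blast
  ultimately show ?thesis
    using const_top_bot_in_concept_lattice[of A B tnorm \<sigma> sw nw R, OF triple]
      const_bot_top_in_concept_lattice[of A B tnorm \<sigma> sw nw R, OF triple] rows cols
    by auto
qed

end
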